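(* Let $C>0$, $h>0$ and let $\hat q:\mathbb{R}\to\mathbb{R}$ be any function. Suppose real sequences $(v_{C,k})$, $(i_{C,k})$, $(v_{M,k})$, $(i_{M,k})$, $(\varphi_{M,k})$, $k=0,1,2,\dots$, satisfy for all $k$: $$i_{C,k}=C\frac{v_{C,k+1}-v_{C,k}}{h},\quad i_{M,k}=\frac{\hat q(\varphi_{M,k+1})-\hat q(\varphi_{M,k})}{h},\quad \varphi_{M,k+1}=\varphi_{M,k}+hv_{M,k},$$ $$i_{C,k}+i_{M,k}=0,\qquad v_{C,k}=v_{M,k}.$$ Then: 1) $(v_{C,k},\varphi_{M,k})$ is an orbit of the two-dimensional map $$v_{C,k+1}=v_{C,k}-\tfrac{1}{C}\big(\hat q(\varphi_{M,k}+hv_{C,k})-\hat q(\varphi_{M,k})\big),\qquad \varphi_{M,k+1}=\varphi_{M,k}+hv_{C,k}.$$ 2) For any step size $h>0$, the function $\Theta_{MC}(v_C,\varphi_M)=Cv_C+\hat q(\varphi_M)$ is a first integral of this map, i.e. $\Theta_{MC}(v_{C,k+1},\varphi_{M,k+1})=\Theta_{MC}(v_{C,k},\varphi_{M,k})$ for all $k\ge 0$ along every orbit. 3) Consequently $\mathbb{R}^2$ is foliated into the invariant sets $\mathcal{M}_{MC}(Q_0)=\{(v_C,\varphi_M)\in\mathbb{R}^2: Cv_C+\hat q(\varphi_M)=Q_0\}$, $Q_0\in\mathbb{R}$, and along any orbit of the map lying in $\mathcal{M}_{MC}(Q_0)$ the variable $\varphi_{M,k}$ obeys the one-dimensional map $$\varphi_{M,k+1}=\varphi_{M,k}-\frac{h}{C}\hat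 q(\varphi_{M,k})+\frac{h}{C}Q_0.$$
   Context: These equations model a discrete-time circuit of a linear capacitor (capacitance $C$, voltage $v_C$, current $i_C$) connected to an ideal flux-controlled memristor with constitutive relation $q_M=\hat q(\varphi_M)$ (voltage $v_M$, current $i_M$, flux $\varphi_M$), discretized with step size $h$; the last two equations are Kirchhoff's current and voltage laws. *)

theory Defs
  imports Complex_Main
begin

definition mc_map :: "real \<Rightarrow> real \<Rightarrow> (real \<Rightarrow> real) \<Rightarrow> real \<times> real \<Rightarrow> real \<times> real" where
  "mc_map C h q = (\<lambda>(v, \<phi>). (v - (1 / C) * (q (\<phi> + h * v) - q \<phi>), \<phi> + h * v))"

definition Theta_MC :: "real \<Rightarrow> (real \<Rightarrow> real) \<Rightarrow> real \<times> real \<Rightarrow> real" where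
  "Theta_MC C q = (\<lambda>(v, \<phi>). C * v + q \<phi>)"

definition M_MC :: "real \<Rightarrow> (real \<Rightarrow> real) \<Rightarrow> real \<Rightarrow> (real \<times> real) set" where
  "M_MC C q Q0 = {(v, \<phi>). C * v + q \<phi> = Q0}"

definition is_orbit :: "('a \<Rightarrow> 'a) \<Rightarrow> (nat \<Rightarrow> 'a) \<Rightarrow> bool" where
  "is_orbit f x \<longleftrightarrow> (\<forall>k. x (Suc k) = f (x k))"

end

theory Submission
  imports Defs
begin

text \<open>Charge conservation: by KCL the capacitor charge C v_C and the memristor charge
  q(phi_M) change by opposite amounts in every step, so their sum Theta_MC is invariant
  for any step size. Its level sets M_MC(Q0) therefore partition the plane into invariant
  sets, and on M_MC(Q0) the relation v_C = (Q0 - q(phi_M)) / C eliminates v_C from the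
  flux update, leaving a one-dimensional map.\<close>

lemma mem_M_MC_iff: "p \<in> M_MC C q Q0 \<longleftrightarrow> Theta_MC C q p = Q0"
  by (cases p) (simp add: M_MC_def Theta_MC_def)

lemma Theta_MC_mc_map:
  assumes "C \<noteq> 0"
  shows "Theta_MC C q (mc_map C h q p) = Theta_MC C q p"
  using assms by (cases p) (simp add: mc_map_def Theta_MC_def algebra_simps)

lemma Theta_MC_orbit_Suc:
  assumes "C \<noteq> 0" and "is_orbit (mc_map C h q) x"
  shows "Theta_MC C q (x (Suc k)) = Theta_MC C q (x k)"
  using assms by (simp add: is_orbit_def Theta_MC_mc_map)

lemma ex1_M_MC: "\<exists>!Q0. p \<in> M_MC C q Q0"
  by (simp add: mem_M_MC_iff)

lemma mc_map_image_M_MC_subset: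
  assumes "C \<noteq> 0"
  shows "mc_map C h q ` M_MC C q Q0 \<subseteq> M_MC C q Q0"
  using assms by (auto simp: mem_M_MC_iff Theta_MC_mc_map)

lemma snd_mc_map_on_M_MC:
  assumes "C \<noteq> 0" and "p \<in> M_MC C q Q0"
  shows "snd (mc_map C h q p) = snd p - (h / C) * q (snd p) + (h / C) * Q0"
proof (cases p)
  case (Pair v \<phi>)
  with assms have "v = (Q0 - q \<phi>) / C"
    by (simp add: M_MC_def field_simps)
  with Pair show ?thesis
    by (simp add: mc_map_def diff_divide_distrib algebra_simps)
qed

lemma discrete_circuit_step_eq_mc_map:
  assumes "C \<noteq> 0" and "h \<noteq> 0"
    and KCL: "C * (v' - v) / h + (q \<phi>' - q \<phi>) / h = 0"
    and flux: "\<phi>' = \<phi> + h * v"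
  shows "(v', \<phi>') = mc_map C h q (v, \<phi>)"
proof -
  from KCL \<open>h \<noteq> 0\<close> have "C * (v' - v) + (q \<phi>' - q \<phi>) = 0"
    by (simp add: add_divide_distrib[symmetric])
  with \<open>C \<noteq> 0\<close> have "v' = v - (1 / C) * (q \<phi>' - q \<phi>)"
    by (simp add: field_simps)
  with flux show ?thesis
    by (simp add: mc_map_def)
qed

theorem proposition1:
  fixes C h :: real and q :: "real \<Rightarrow> real"
    and vC iC vM iM \<phi>M :: "nat \<Rightarrow> real"
  assumes C_pos: "C > 0" and h_pos: "h > 0"
    and eqC: "\<And>k. iC k = C * (vC (Suc k) - vC k) / h"
    and eqM: "\<And>k. iM k = (q (\<phi>M (Suc k)) - q (\<phi>M k)) / h"
    and eqphi: "\<And>k. \<phi>M (Suc k) = \<phi>M k + h * vM k"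
    and KCL: "\<And>k. iC k + iM k = 0"
    and KVL: "\<And>k. vC k = vM k"
  shows "is_orbit (mc_map C h q) (\<lambda>k. (vC k, \<phi>M k))
    \<and> (\<forall>x. is_orbit (mc_map C h q) x \<longrightarrow>
           (\<forall>k. Theta_MC C q (x (Suc k)) = Theta_MC C q (x k)))
    \<and> (\<forall>p. \<exists>!Q0. p \<in> M_MC C q Q0)
    \<and> (\<forall>Q0. mc_map C h q ` M_MC C q Q0 \<subseteq> M_MC C q Q0)
    \<and> (\<forall>x Q0. is_orbit (mc_map C h q) x \<longrightarrow> (\<forall>j. x j \<in> M_MC C q Q0) \<longrightarrow>
           (\<forall>k. snd (x (Suc k)) = snd (x k) - (h / C) * q (snd (x k)) + (h / C) * Q0))"
proof -
  have "C \<noteq> 0" "h \<noteq> 0" using C_pos h_pos by auto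
  have "is_orbit (mc_map C h q) (\<lambda>k. (vC k, \<phi>M k))"
    unfolding is_orbit_def
  proof
    fix k
    show "(vC (Suc k), \<phi>M (Suc k)) = mc_map C h q (vC k, \<phi>M k)"
      using \<open>C \<noteq> 0\<close> \<open>h \<noteq> 0\<close> KCL[of k]
      by (intro discrete_circuit_step_eq_mc_map) (simp_all add: eqC eqM eqphi KVL)
  qed
  moreover have "snd (x (Suc k)) = snd (x k) - (h / C) * q (snd (x k)) + (h / C) * Q0"
    if "is_orbit (mc_map C h q) x" and "\<forall>j. x j \<in> M_MC C q Q0" for x Q0 k
    using that(1) snd_mc_map_on_M_MC[OF \<open>C \<noteq> 0\<close> that(2)[rule_format, of k]]
    by (simp add: is_orbit_def)
  ultimately show ?thesis
    using \<open>C \<noteq> 0\<close> Theta_MC_orbit_Suc ex1_M_MC mc_map_image_M_MC_subset by blast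
qed

end
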